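(* For any $\epsilon>0$ there exists a family $\mathcal C$ of tree-structured Ising models with $n$ leaves labeled $1,\dots,n$, with $\log|\mathcal C|\le O(n\log(n/\epsilon))$, such that for any tree-structured Ising model with leaves $1,\dots,n$ there exists a model in $\mathcal C$ whose leaf distribution is within total variation distance $\epsilon$ of the leaf distribution of the given model.
   Context: A tree-structured Ising model is given by a tree $T=(V,E)$ whose leaves are labeled $1,\dots,n$ (standing assumption: every non-leaf node has degree $3$) with edge weights $\theta_e\in[-1,1]$; spins $x_v\in\{-1,1\}$ at all nodes have probability $\propto\prod_{(u,v)\in E}\frac{1+\theta_{uv}x_ux_v}{2}$, and the leaf distribution is the marginal on the leaf spins. Total variation distance is $\frac12\sum_x|\mu(x)-\nu(x)|$. *)

theory Defs
  imports "HOL-Library.FuncSet" Complex_Main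
begin

text \<open>A tree-structured Ising model on leaves 1..n is encoded as a triple (V, E, theta):
  V : finite set of nodes (natural numbers); the leaves are exactly the nodes 1..n
      (the leaf with label i is the node i);
  E : set of undirected edges, each a 2-element subset of V;
  theta : edge weight function (only its values on E matter).\<close>

type_synonym ising = "nat set \<times> nat set set \<times> (nat set \<Rightarrow> real)"

definition adj :: "nat set set \<Rightarrow> (nat \<times> nat) set" where
  "adj E = {(u, v). {u, v} \<in> E}"

definition connected_graph :: "nat set \<Rightarrow> nat set set \<Rightarrow> bool" where
  "connected_graph V E \<longleftrightarrow> (\<forall>u\<in>V. \<forall>v\<in>V. (u, v) \<in> (adj E)\<^sup>*)"

definition acyclic_graph :: "nat set set \<Rightarrow> bool" where
  "acyclic_graph E \<longleftrightarrow> (\<forall>u v. {u, v} \<in> E \<longrightarrow> (u, v) \<notin> (adj (E - {{u, v}}))\<^sup>*)"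

definition is_tree :: "nat set \<Rightarrow> nat set set \<Rightarrow> bool" where
  "is_tree V E \<longleftrightarrow> finite V \<and> V \<noteq> {} \<and>
     (\<forall>e\<in>E. \<exists>u v. e = {u, v} \<and> u \<noteq> v \<and> u \<in> V \<and> v \<in> V) \<and>
     connected_graph V E \<and> acyclic_graph E"

definition degree :: "nat set set \<Rightarrow> nat \<Rightarrow> nat" where
  "degree E v = card {e \<in> E. v \<in> e}"

definition ising_model :: "nat \<Rightarrow> ising \<Rightarrow> bool" where
  "ising_model n M = (case M of (V, E, \<theta>) \<Rightarrow>
     is_tree V E \<and>
     {v \<in> V. degree E v \<le> 1} = {1..n} \<and>
     (\<forall>v\<in>V. v \<notin> {1..n} \<longrightarrow> degree E v = 3) \<and>
     (\<forall>e\<in>E. -1 \<le> \<theta> e \<and> \<theta> e \<le> 1))"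

definition spins :: "nat set \<Rightarrow> (nat \<Rightarrow> real) set" where
  "spins S = S \<rightarrow>\<^sub>E {-1, 1}"

definition weight :: "ising \<Rightarrow> (nat \<Rightarrow> real) \<Rightarrow> real" where
  "weight M x = (case M of (V, E, \<theta>) \<Rightarrow> \<Prod>e\<in>E. (1 + \<theta> e * (\<Prod>v\<in>e. x v)) / 2)"

definition partition_fn :: "ising \<Rightarrow> real" where
  "partition_fn M = (\<Sum>x\<in>spins (fst M). weight M x)"

definition leaf_dist :: "nat \<Rightarrow> ising \<Rightarrow> (nat \<Rightarrow> real) \<Rightarrow> real" where
  "leaf_dist n M y =
     (\<Sum>x\<in>{x \<in> spins (fst M). restrict x {1..n} = y}. weight M x) / partition_fn M"

definition tv_dist :: "nat \<Rightarrow> ((nat \<Rightarrow> real) \<Rightarrow> real) \<Rightarrow> ((nat \<Rightarrow> real) \<Rightarrow> real) \<Rightarrow> real" where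
  "tv_dist n \<mu> \<nu> = (1/2) * (\<Sum>y\<in>spins {1..n}. \<bar>\<mu> y - \<nu> y\<bar>)"

end

(*
  Every finite tree arises from single vertices by repeatedly joining two disjoint trees with
  an edge. Along such a join the Ising weight factorises, and since the weight is invariant
  under flipping all spins, each edge factor (1 + theta x_u x_v) / 2 averages to 1/2 against
  the weight of a subtree. This gives partition function 2 for every tree model and the bound
  sum_x |w_theta(x) - w_theta'(x)| <= 2 sum_e |theta_e - theta'_e| for two models on the same
  tree, so the leaf distributions are within half the l1-distance of the edge weights in total
  variation.

  A model with n leaves and inner degrees 3 has at most 3n - 2 vertices, so its inner vertices
  can be relabelled into {1..3n} without changing the leaf distribution, and rounding the
  weights down to multiples of 1/N with N = ceil(2n/eps) costs at most eps. The rounded models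
  are determined by their vertex set and at most 3n weighted edges, so there are at most
  (2 (9n^2 (2N + 1) + 1))^(3n) <= (n/eps)^(30n) of them when n >= 2, and only one when n = 1.
*)
theory Submission
  imports Defs
begin

section \<open>Trees built by joining\<close>

inductive joined_tree :: "nat set \<Rightarrow> nat set set \<Rightarrow> bool" where
  single: "joined_tree {r} {}"
| join: "joined_tree V1 E1 \<Longrightarrow> joined_tree V2 E2 \<Longrightarrow> V1 \<inter> V2 = {} \<Longrightarrow> u \<in> V1 \<Longrightarrow> v \<in> V2 \<Longrightarrow>
     joined_tree (V1 \<union> V2) (insert {u, v} (E1 \<union> E2))"

definition edges_on :: "nat set \<Rightarrow> nat set set \<Rightarrow> bool" where
  "edges_on V E \<longleftrightarrow> (\<forall>e\<in>E. e \<subseteq> V \<and> card e = 2)"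

lemma edges_onD:
  assumes "edges_on V E" "e \<in> E"
  shows "e \<subseteq> V" "card e = 2"
  using assms unfolding edges_on_def by auto

lemma join_edges_disjoint:
  assumes "edges_on V1 E1" "edges_on V2 E2" "V1 \<inter> V2 = {}" "u \<in> V1" "v \<in> V2"
  shows "E1 \<inter> E2 = {}" "{u, v} \<notin> E1 \<union> E2"
proof -
  have "e \<noteq> {}" if "e \<in> E1 \<union> E2" for e
    using that edges_onD(2)[OF assms(1)] edges_onD(2)[OF assms(2)] by fastforce
  then show "E1 \<inter> E2 = {}" "{u, v} \<notin> E1 \<union> E2"
    using assms edges_onD(1) by blast+
qed

lemma joined_tree_edges_on: "joined_tree V E \<Longrightarrow> edges_on V E"
proof (induction rule: joined_tree.induct)
  case (join V1 E1 V2 E2 u v)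
  then have "u \<noteq> v" by blast
  with join show ?case unfolding edges_on_def by auto
qed (simp add: edges_on_def)

lemma joined_tree_finite: "joined_tree V E \<Longrightarrow> finite V \<and> finite E"
  by (induction rule: joined_tree.induct) auto

lemma joined_tree_nonempty: "joined_tree V E \<Longrightarrow> V \<noteq> {}"
  by (induction rule: joined_tree.induct) auto

lemma joined_tree_card: "joined_tree V E \<Longrightarrow> card V = card E + 1"
proof (induction rule: joined_tree.induct)
  case (join V1 E1 V2 E2 u v)
  note disj = join_edges_disjoint[OF joined_tree_edges_on[OF join.hyps(1)]
      joined_tree_edges_on[OF join.hyps(2)] join.hyps(3-5)]
  have "finite V1" "finite E1" "finite V2" "finite E2"
    using joined_tree_finite join.hyps(1,2) by auto
  with join disj show ?case by (simp add: card_Un_disjoint)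
qed simp

lemma adj_iff [simp]: "(a, b) \<in> adj E \<longleftrightarrow> {a, b} \<in> E"
  unfolding adj_def by simp

lemma adj_rtrancl_sym: "(a, b) \<in> (adj E)\<^sup>* \<Longrightarrow> (b, a) \<in> (adj E)\<^sup>*"
  using sym_rtrancl[of "adj E"] unfolding sym_def by (auto simp: insert_commute)

lemma adj_rtrancl_mono: "E \<subseteq> F \<Longrightarrow> (a, b) \<in> (adj E)\<^sup>* \<Longrightarrow> (a, b) \<in> (adj F)\<^sup>*"
  using rtrancl_mono[of "adj E" "adj F"] unfolding adj_def by blast

lemma acyclic_graph_mono:
  assumes "acyclic_graph F" "E \<subseteq> F"
  shows "acyclic_graph E"
  unfolding acyclic_graph_def
proof (intro allI impI)
  fix u v assume "{u, v} \<in> E"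
  with assms have "(u, v) \<notin> (adj (F - {{u, v}}))\<^sup>*"
    unfolding acyclic_graph_def by blast
  moreover have "E - {{u, v}} \<subseteq> F - {{u, v}}" using assms(2) by blast
  ultimately show "(u, v) \<notin> (adj (E - {{u, v}}))\<^sup>*" using adj_rtrancl_mono by blast
qed

lemma rtrancl_map_rtrancl:
  assumes "\<And>x y. (x, y) \<in> r \<Longrightarrow> (f x, f y) \<in> s\<^sup>*" and "(x, y) \<in> r\<^sup>*"
  shows "(f x, f y) \<in> s\<^sup>*"
  using assms(2) by induction (auto intro: rtrancl_trans assms(1))

lemma join_connected:
  assumes "connected_graph V1 E1" "connected_graph V2 E2" "u \<in> V1" "v \<in> V2"
  shows "connected_graph (V1 \<union> V2) (insert {u, v} (E1 \<union> E2))"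
proof -
  let ?R = "adj (insert {u, v} (E1 \<union> E2))"
  have in1: "(a, b) \<in> ?R\<^sup>*" if "a \<in> V1" "b \<in> V1" for a b
    using that assms(1) adj_rtrancl_mono[of E1 "insert {u, v} (E1 \<union> E2)"]
    unfolding connected_graph_def by blast
  have in2: "(a, b) \<in> ?R\<^sup>*" if "a \<in> V2" "b \<in> V2" for a b
    using that assms(2) adj_rtrancl_mono[of E2 "insert {u, v} (E1 \<union> E2)"]
    unfolding connected_graph_def by blast
  have "(u, v) \<in> ?R\<^sup>*" by auto
  then have across: "(a, b) \<in> ?R\<^sup>*" if "a \<in> V1" "b \<in> V2" for a b
    using in1[OF that(1) assms(3)] in2[OF assms(4) that(2)] by (meson rtrancl_trans)
  show ?thesis
    unfolding connected_graph_def using in1 in2 across adj_rtrancl_sym by blast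
qed

lemma join_no_path_across:
  assumes "edges_on V1 E1" "edges_on V2 E2" "V1 \<inter> V2 = {}" "u \<in> V1" "v \<in> V2"
  shows "(u, v) \<notin> (adj (E1 \<union> E2))\<^sup>*"
proof
  assume "(u, v) \<in> (adj (E1 \<union> E2))\<^sup>*"
  moreover have "((x \<in> V1), (y \<in> V1)) \<in> Id\<^sup>*" if "(x, y) \<in> adj (E1 \<union> E2)" for x y
  proof -
    have "{x, y} \<subseteq> V1 \<or> {x, y} \<subseteq> V2"
      using that edges_onD(1)[OF assms(1)] edges_onD(1)[OF assms(2)] by auto
    with assms(3) show ?thesis by auto
  qed
  ultimately have "(u \<in> V1, v \<in> V1) \<in> Id\<^sup>*" by (rule rtrancl_map_rtrancl[rotated])
  with assms(3-5) show False by auto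
qed

text \<open>Collapsing the second tree onto \<open>u\<close> maps every path of the join to a path of the first tree.\<close>
lemma join_no_cycle_in_left:
  assumes "acyclic_graph E1" "edges_on V1 E1" "edges_on V2 E2" "V1 \<inter> V2 = {}" "u \<in> V1" "v \<in> V2"
    and ab: "{a, b} \<in> E1"
  shows "(a, b) \<notin> (adj (insert {u, v} (E1 \<union> E2) - {{a, b}}))\<^sup>*"
proof
  let ?g = "\<lambda>x. if x \<in> V1 then x else u"
  assume "(a, b) \<in> (adj (insert {u, v} (E1 \<union> E2) - {{a, b}}))\<^sup>*"
  moreover have "(?g x, ?g y) \<in> (adj (E1 - {{a, b}}))\<^sup>*"
    if "(x, y) \<in> adj (insert {u, v} (E1 \<union> E2) - {{a, b}})" for x y
  proof -
    from that consider "{x, y} = {u, v}" | "{x, y} \<in> E1 - {{a, b}}" | "{x, y} \<in> E2" by auto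
    then show ?thesis
    proof cases
      case 1
      with assms(4-6) show ?thesis by (auto simp: doubleton_eq_iff)
    next
      case 2
      then have "x \<in> V1" "y \<in> V1"
        using assms(2) edges_onD(1) by auto
      with 2 show ?thesis using r_into_rtrancl[of "(x, y)" "adj (E1 - {{a, b}})"] by simp
    next
      case 3
      then have "x \<notin> V1" "y \<notin> V1"
        using edges_onD(1)[OF assms(3)] assms(4) by auto
      then show ?thesis by simp
    qed
  qed
  ultimately have "(?g a, ?g b) \<in> (adj (E1 - {{a, b}}))\<^sup>*" by (rule rtrancl_map_rtrancl[rotated])
  moreover have "a \<in> V1" "b \<in> V1" using ab assms(2) edges_onD(1) by auto
  ultimately show False using assms(1) ab unfolding acyclic_graph_def by auto
qed

lemma is_tree_iff_edges_on:
  "is_tree V E \<longleftrightarrow> finite V \<and> V \<noteq> {} \<and> edges_on V E \<and> connected_graph V E \<and> acyclic_graph E"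
proof -
  have "(\<exists>a b. e = {a, b} \<and> a \<noteq> b \<and> a \<in> V \<and> b \<in> V) \<longleftrightarrow> e \<subseteq> V \<and> card e = 2" for e
    unfolding card_2_iff by blast
  then have "(\<forall>e\<in>E. \<exists>a b. e = {a, b} \<and> a \<noteq> b \<and> a \<in> V \<and> b \<in> V) \<longleftrightarrow> edges_on V E"
    by (simp only: edges_on_def)
  then show ?thesis by (simp only: is_tree_def)
qed

lemma join_acyclic:
  assumes "acyclic_graph E1" "acyclic_graph E2" "edges_on V1 E1" "edges_on V2 E2"
    and "V1 \<inter> V2 = {}" "u \<in> V1" "v \<in> V2"
  shows "acyclic_graph (insert {u, v} (E1 \<union> E2))"
  unfolding acyclic_graph_def
proof (intro allI impI)
  let ?E = "insert {u, v} (E1 \<union> E2)"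
  fix a b assume "{a, b} \<in> ?E"
  then consider "{a, b} = {u, v}" | "{a, b} \<in> E1" | "{a, b} \<in> E2" by blast
  then show "(a, b) \<notin> (adj (?E - {{a, b}}))\<^sup>*"
  proof cases
    case 1
    have "?E - {{a, b}} = E1 \<union> E2"
      unfolding 1 using join_edges_disjoint(2)[OF assms(3-7)] by (rule Diff_insert_absorb)
    moreover have "a = u \<and> b = v \<or> a = v \<and> b = u"
      using 1 by (simp add: doubleton_eq_iff)
    ultimately show ?thesis
      using join_no_path_across[OF assms(3-7)] adj_rtrancl_sym by metis
  next
    case 2
    then show ?thesis using join_no_cycle_in_left[OF assms(1,3,4,5,6,7)] by blast
  next
    case 3
    have "V2 \<inter> V1 = {}" using assms(5) by blast
    with 3 have "(a, b) \<notin> (adj (insert {v, u} (E2 \<union> E1) - {{a, b}}))\<^sup>*"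
      using join_no_cycle_in_left[OF assms(2,4,3) _ assms(7,6)] by blast
    moreover have "insert {v, u} (E2 \<union> E1) = ?E"
      by (simp add: insert_commute Un_commute)
    ultimately show ?thesis by simp
  qed
qed

lemma joined_tree_is_tree: "joined_tree V E \<Longrightarrow> is_tree V E"
proof (induction rule: joined_tree.induct)
  case (single r)
  then show ?case unfolding is_tree_def connected_graph_def acyclic_graph_def by simp
next
  case (join V1 E1 V2 E2 u v)
  have tree: "joined_tree (V1 \<union> V2) (insert {u, v} (E1 \<union> E2))"
    using joined_tree.join[OF join.hyps] .
  have "acyclic_graph (insert {u, v} (E1 \<union> E2))"
    using join_acyclic join.IH joined_tree_edges_on join.hyps unfolding is_tree_iff_edges_on by blast
  moreover have "connected_graph (V1 \<union> V2) (insert {u, v} (E1 \<union> E2))"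
    using join_connected join.IH join.hyps(4,5) unfolding is_tree_iff_edges_on by blast
  ultimately show ?case
    unfolding is_tree_iff_edges_on
    using joined_tree_finite[OF tree] joined_tree_nonempty[OF tree] joined_tree_edges_on[OF tree]
    by blast
qed

lemma path_stays_in_component:
  assumes "edges_on V E" "p \<in> V" "(p, x) \<in> (adj (E - {e}))\<^sup>*"
  defines "C \<equiv> {y \<in> V. (p, y) \<in> (adj (E - {e}))\<^sup>*}"
  shows "x \<in> C \<and> (p, x) \<in> (adj {f \<in> E - {e}. f \<subseteq> C})\<^sup>*"
  using assms(3)
proof induction
  case base
  then show ?case using assms(2) unfolding C_def by simp
next
  case (step y z)
  then have yz: "{y, z} \<in> E - {e}" by simp
  then have "z \<in> V" using edges_onD(1)[OF assms(1)] by auto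
  with step have "z \<in> C" unfolding C_def by (auto intro: rtrancl_into_rtrancl)
  with yz step.IH have "(y, z) \<in> adj {f \<in> E - {e}. f \<subseteq> C}" by simp
  with step.IH \<open>z \<in> C\<close> show ?case by (auto intro: rtrancl_into_rtrancl)
qed

lemma component_is_tree:
  fixes e :: "nat set"
  assumes "is_tree V E" "p \<in> V"
  defines "C \<equiv> {y \<in> V. (p, y) \<in> (adj (E - {e}))\<^sup>*}"
  shows "is_tree C {f \<in> E - {e}. f \<subseteq> C}"
proof -
  let ?F = "{f \<in> E - {e}. f \<subseteq> C}"
  have ok: "edges_on V E" and "finite V" and "acyclic_graph E"
    using assms(1) by (simp_all add: is_tree_iff_edges_on)
  have reach: "(p, x) \<in> (adj ?F)\<^sup>*" if "x \<in> C" for x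
    using path_stays_in_component[OF ok assms(2)] that unfolding C_def by blast
  have "connected_graph C ?F"
    unfolding connected_graph_def
  proof (intro ballI)
    fix a b assume "a \<in> C" "b \<in> C"
    then show "(a, b) \<in> (adj ?F)\<^sup>*"
      using rtrancl_trans[OF adj_rtrancl_sym[OF reach] reach] by blast
  qed
  moreover have "acyclic_graph ?F"
    by (rule acyclic_graph_mono[OF \<open>acyclic_graph E\<close>]) blast
  moreover have "edges_on C ?F"
    using ok unfolding edges_on_def by blast
  moreover have "finite C" "p \<in> C"
    using \<open>finite V\<close> assms(2) unfolding C_def by auto
  ultimately show ?thesis
    unfolding is_tree_iff_edges_on by blast
qed

lemma removed_edge_components:
  assumes tree: "is_tree V E" and e: "{u, v} \<in> E"
  defines "R \<equiv> adj (E - {{u, v}})"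
  defines "V1 \<equiv> {x \<in> V. (u, x) \<in> R\<^sup>*}" and "V2 \<equiv> {x \<in> V. (v, x) \<in> R\<^sup>*}"
  shows "V1 \<inter> V2 = {}" and "V = V1 \<union> V2"
    and "E = insert {u, v} ({f \<in> E - {{u, v}}. f \<subseteq> V1} \<union> {f \<in> E - {{u, v}}. f \<subseteq> V2})"
proof -
  have ok: "edges_on V E" and con: "connected_graph V E" and ac: "acyclic_graph E"
    using tree by (simp_all add: is_tree_iff_edges_on)
  have "u \<in> V" using edges_onD(1)[OF ok e] by simp
  show "V1 \<inter> V2 = {}"
  proof (rule ccontr)
    assume "V1 \<inter> V2 \<noteq> {}"
    then obtain w where "(u, w) \<in> R\<^sup>*" "(v, w) \<in> R\<^sup>*"
      unfolding V1_def V2_def by blast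
    then have "(u, v) \<in> R\<^sup>*"
      unfolding R_def using rtrancl_trans adj_rtrancl_sym by metis
    with ac e show False unfolding acyclic_graph_def R_def by blast
  qed
  have "(u, w) \<in> R\<^sup>* \<or> (v, w) \<in> R\<^sup>*" if "(u, w) \<in> (adj E)\<^sup>*" for w
    using that
  proof induction
    case (step y z)
    show ?case
    proof (cases "{y, z} = {u, v}")
      case True
      then show ?thesis by (auto simp: doubleton_eq_iff)
    next
      case False
      with step.hyps(2) have "(y, z) \<in> R" unfolding R_def by simp
      with step.IH show ?thesis by (meson rtrancl_into_rtrancl)
    qed
  qed simp
  then show V: "V = V1 \<union> V2"
    using con \<open>u \<in> V\<close> unfolding connected_graph_def V1_def V2_def by blast
  have "f \<subseteq> V1 \<or> f \<subseteq> V2" if f_in: "f \<in> E - {{u, v}}" for f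
  proof -
    obtain a b where f: "f = {a, b}"
      using edges_onD(2)[OF ok DiffD1[OF f_in]] unfolding card_2_iff by blast
    have ab: "a \<in> V" "b \<in> V"
      using f_in f edges_onD(1)[OF ok] by auto
    from f_in have "(a, b) \<in> R" unfolding R_def f by simp
    then have "a \<in> V1 \<Longrightarrow> b \<in> V1" "a \<in> V2 \<Longrightarrow> b \<in> V2"
      using ab unfolding V1_def V2_def by (auto intro: rtrancl_into_rtrancl)
    then show ?thesis using f ab V by blast
  qed
  then show "E = insert {u, v} ({f \<in> E - {{u, v}}. f \<subseteq> V1} \<union> {f \<in> E - {{u, v}}. f \<subseteq> V2})"
    using e by blast
qed

lemma is_tree_joined_tree: "is_tree V E \<Longrightarrow> joined_tree V E"
proof (induction "card E" arbitrary: V E rule: less_induct)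
  case less
  have ok: "edges_on V E" and "finite V" and con: "connected_graph V E" and "V \<noteq> {}"
    using less.prems by (simp_all add: is_tree_iff_edges_on)
  show ?case
  proof (cases "E = {}")
    case True
    obtain r where r: "r \<in> V" using \<open>V \<noteq> {}\<close> by blast
    have "w = r" if "w \<in> V" for w
      using con r that True unfolding connected_graph_def adj_def by simp
    then have "V = {r}" using r by blast
    then show ?thesis using True joined_tree.single by simp
  next
    case False
    then obtain u v where e: "{u, v} \<in> E"
      using edges_onD(2)[OF ok] unfolding card_2_iff by blast
    then have uv: "u \<in> V" "v \<in> V"
      using edges_onD(1)[OF ok e] by auto
    have "finite E"
      using ok \<open>finite V\<close> edges_onD(1) finite_subset[of E "Pow V"] by blast
    then have smaller: "card F < card E" if "F \<subseteq> E - {{u, v}}" for F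
      using psubset_card_mono that e by blast
    define R where "R = adj (E - {{u, v}})"
    define V1 where "V1 = {x \<in> V. (u, x) \<in> R\<^sup>*}"
    define V2 where "V2 = {x \<in> V. (v, x) \<in> R\<^sup>*}"
    have tree1: "joined_tree V1 {f \<in> E - {{u, v}}. f \<subseteq> V1}"
      using less.hyps[OF smaller component_is_tree[OF less.prems uv(1)]]
      unfolding V1_def R_def by blast
    have tree2: "joined_tree V2 {f \<in> E - {{u, v}}. f \<subseteq> V2}"
      using less.hyps[OF smaller component_is_tree[OF less.prems uv(2)]]
      unfolding V2_def R_def by blast
    have disj: "V1 \<inter> V2 = {}" and V: "V = V1 \<union> V2"
      and E: "E = insert {u, v} ({f \<in> E - {{u, v}}. f \<subseteq> V1} \<union> {f \<in> E - {{u, v}}. f \<subseteq> V2})"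
      unfolding V1_def V2_def R_def by (rule removed_edge_components[OF less.prems e])+
    have "u \<in> V1" "v \<in> V2"
      using uv unfolding V1_def V2_def by auto
    with joined_tree.join[OF tree1 tree2 disj] show ?thesis
      by (subst V, subst E) blast
  qed
qed

lemma is_tree_iff_joined_tree: "is_tree V E \<longleftrightarrow> joined_tree V E"
  using is_tree_joined_tree joined_tree_is_tree by blast

section \<open>Ising weights on trees\<close>

definition ising_weight :: "nat set set \<Rightarrow> (nat set \<Rightarrow> real) \<Rightarrow> (nat \<Rightarrow> real) \<Rightarrow> real" where
  "ising_weight E \<theta> x = (\<Prod>e\<in>E. (1 + \<theta> e * (\<Prod>v\<in>e. x v)) / 2)"

lemma weight_eq_ising_weight [simp]: "weight (V, E, \<theta>) = ising_weight E \<theta>"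
  by (simp add: weight_def ising_weight_def fun_eq_iff)

lemma finite_spins: "finite V \<Longrightarrow> finite (spins V)"
  unfolding spins_def by (intro finite_PiE) auto

lemma spins_values: "x \<in> spins V \<Longrightarrow> v \<in> V \<Longrightarrow> x v = 1 \<or> x v = -1"
  unfolding spins_def by (auto simp: PiE_iff)

lemma card_spins_singleton: "card (spins {r}) = 2"
  unfolding spins_def by (simp add: card_PiE)

lemma ising_weight_nonneg:
  assumes "x \<in> spins V" "edges_on V E" "\<forall>e\<in>E. \<bar>\<theta> e\<bar> \<le> 1"
  shows "0 \<le> ising_weight E \<theta> x"
  unfolding ising_weight_def
proof (intro prod_nonneg)
  fix e assume "e \<in> E"
  have "\<bar>x v\<bar> = 1" if "v \<in> e" for v
    using spins_values[OF assms(1)] edges_onD(1)[OF assms(2) \<open>e \<in> E\<close>] that by fastforce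
  then have "\<bar>\<Prod>v\<in>e. x v\<bar> = 1" by (simp add: abs_prod)
  then have "\<bar>\<theta> e * (\<Prod>v\<in>e. x v)\<bar> \<le> 1"
    using assms(3) \<open>e \<in> E\<close> by (simp add: abs_mult)
  then show "0 \<le> (1 + \<theta> e * (\<Prod>v\<in>e. x v)) / 2" by (simp add: abs_le_iff)
qed

definition merge :: "nat set \<Rightarrow> (nat \<Rightarrow> real) \<Rightarrow> (nat \<Rightarrow> real) \<Rightarrow> nat \<Rightarrow> real" where
  "merge A x1 x2 = (\<lambda>i. if i \<in> A then x1 i else x2 i)"

lemma bij_betw_merge:
  assumes "A \<inter> B = {}"
  shows "bij_betw (\<lambda>(x1, x2). merge A x1 x2) (spins A \<times> spins B) (spins (A \<union> B))"
proof (rule bij_betwI[where g = "\<lambda>x. (restrict x A, restrict x B)"])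
  show "(\<lambda>(x1, x2). merge A x1 x2) \<in> spins A \<times> spins B \<rightarrow> spins (A \<union> B)"
    unfolding spins_def merge_def by (fastforce simp: PiE_iff extensional_def)
  show "(\<lambda>x. (restrict x A, restrict x B)) \<in> spins (A \<union> B) \<rightarrow> spins A \<times> spins B"
    unfolding spins_def by (auto simp: PiE_iff)
  show "(\<lambda>x. (restrict x A, restrict x B)) ((\<lambda>(x1, x2). merge A x1 x2) p) = p"
    if "p \<in> spins A \<times> spins B" for p
    using that assms unfolding spins_def merge_def
    by (auto simp: PiE_iff extensional_def fun_eq_iff)
  show "(\<lambda>(x1, x2). merge A x1 x2) ((\<lambda>x. (restrict x A, restrict x B)) x) = x"
    if "x \<in> spins (A \<union> B)" for x
    using that unfolding spins_def merge_def by (auto simp: PiE_iff extensional_def fun_eq_iff)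
qed

lemma sum_spins_Un:
  assumes "A \<inter> B = {}"
  shows "(\<Sum>x\<in>spins (A \<union> B). F x) = (\<Sum>x1\<in>spins A. \<Sum>x2\<in>spins B. F (merge A x1 x2))"
  by (simp add: sum.cartesian_product sum.reindex_bij_betw[OF bij_betw_merge[OF assms], symmetric]
      case_prod_beta)

lemma ising_weight_join:
  assumes "joined_tree V1 E1" "joined_tree V2 E2" "V1 \<inter> V2 = {}" "u \<in> V1" "v \<in> V2"
  shows "ising_weight (insert {u, v} (E1 \<union> E2)) \<theta> (merge V1 x1 x2) =
    (1 + \<theta> {u, v} * (x1 u * x2 v)) / 2 * ising_weight E1 \<theta> x1 * ising_weight E2 \<theta> x2"
proof -
  have ok1: "edges_on V1 E1" and ok2: "edges_on V2 E2"
    using assms(1,2) joined_tree_edges_on by auto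
  note disj = join_edges_disjoint[OF ok1 ok2 assms(3-5)]
  have "(\<Prod>w\<in>e. merge V1 x1 x2 w) = (\<Prod>w\<in>e. x1 w)" if "e \<in> E1" for e
    using edges_onD(1)[OF ok1 that] unfolding merge_def by (intro prod.cong) auto
  moreover have "(\<Prod>w\<in>e. merge V1 x1 x2 w) = (\<Prod>w\<in>e. x2 w)" if "e \<in> E2" for e
    using edges_onD(1)[OF ok2 that] assms(3) unfolding merge_def by (intro prod.cong) auto
  moreover have "u \<noteq> v" "v \<notin> V1" using assms(3-5) by auto
  then have "(\<Prod>w\<in>{u, v}. merge V1 x1 x2 w) = x1 u * x2 v"
    using assms(4) unfolding merge_def by simp
  moreover have "finite E1" "finite E2"
    using assms(1,2) joined_tree_finite by auto
  ultimately show ?thesis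
    using disj unfolding ising_weight_def by (simp add: prod.union_disjoint)
qed

definition spin_flip :: "nat set \<Rightarrow> (nat \<Rightarrow> real) \<Rightarrow> nat \<Rightarrow> real" where
  "spin_flip V x = (\<lambda>v\<in>V. - x v)"

lemma spin_flip_apply: "v \<in> V \<Longrightarrow> spin_flip V x v = - x v"
  unfolding spin_flip_def by simp

lemma spin_flip_spins: "x \<in> spins V \<Longrightarrow> spin_flip V x \<in> spins V"
  unfolding spins_def spin_flip_def by (auto simp: PiE_iff)

lemma spin_flip_spin_flip: "x \<in> spins V \<Longrightarrow> spin_flip V (spin_flip V x) = x"
  unfolding spins_def spin_flip_def by (auto simp: PiE_iff extensional_def fun_eq_iff)

lemma ising_weight_spin_flip:
  assumes "edges_on V E"
  shows "ising_weight E \<theta> (spin_flip V x) = ising_weight E \<theta> x"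
  unfolding ising_weight_def
proof (intro prod.cong refl)
  fix e assume "e \<in> E"
  then obtain a b where "e = {a, b}" "a \<noteq> b" "a \<in> V" "b \<in> V"
    using edges_onD[OF assms] unfolding card_2_iff by blast
  then show "(1 + \<theta> e * (\<Prod>v\<in>e. spin_flip V x v)) / 2 = (1 + \<theta> e * (\<Prod>v\<in>e. x v)) / 2"
    unfolding spin_flip_def by simp
qed

text \<open>The weight is invariant under flipping all spins, so every single spin has mean zero.\<close>
lemma sum_spin_times_ising_weight:
  assumes "edges_on V E" "v \<in> V"
  shows "(\<Sum>x\<in>spins V. x v * ising_weight E \<theta> x) = 0"
proof -
  have "(\<Sum>x\<in>spins V. x v * ising_weight E \<theta> x) =
      (\<Sum>x\<in>spins V. spin_flip V x v * ising_weight E \<theta> (spin_flip V x))"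
    by (rule sum.reindex_bij_witness[of _ "spin_flip V" "spin_flip V"])
      (simp_all add: spin_flip_spins spin_flip_spin_flip)
  also have "\<dots> = - (\<Sum>x\<in>spins V. x v * ising_weight E \<theta> x)"
    by (simp add: ising_weight_spin_flip[OF assms(1)] spin_flip_apply[OF assms(2)] sum_negf)
  finally show ?thesis by simp
qed

lemma sum_edge_factor_times_ising_weight:
  assumes "edges_on V E" "v \<in> V"
  shows "(\<Sum>x\<in>spins V. (1 + c * x v) / 2 * ising_weight E \<theta> x) =
    (\<Sum>x\<in>spins V. ising_weight E \<theta> x) / 2"
proof -
  have "(\<Sum>x\<in>spins V. (1 + c * x v) / 2 * ising_weight E \<theta> x) =
      (\<Sum>x\<in>spins V. ising_weight E \<theta> x / 2 + c / 2 * (x v * ising_weight E \<theta> x))"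
    by (intro sum.cong refl) (simp add: field_simps)
  also have "\<dots> = (\<Sum>x\<in>spins V. ising_weight E \<theta> x) / 2 +
      c / 2 * (\<Sum>x\<in>spins V. x v * ising_weight E \<theta> x)"
    by (simp add: sum.distrib sum_distrib_left sum_divide_distrib)
  finally show ?thesis using sum_spin_times_ising_weight[OF assms] by simp
qed

lemma partition_sum_joined_tree:
  "joined_tree V E \<Longrightarrow> (\<Sum>x\<in>spins V. ising_weight E \<theta> x) = 2"
proof (induction rule: joined_tree.induct)
  case (single r)
  then show ?case by (simp add: ising_weight_def card_spins_singleton)
next
  case (join V1 E1 V2 E2 u v)
  have "(\<Sum>x\<in>spins (V1 \<union> V2). ising_weight (insert {u, v} (E1 \<union> E2)) \<theta> x) =
      (\<Sum>x1\<in>spins V1. ising_weight E1 \<theta> x1 *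
         (\<Sum>x2\<in>spins V2. (1 + \<theta> {u, v} * x1 u * x2 v) / 2 * ising_weight E2 \<theta> x2))"
    by (simp add: sum_spins_Un[OF join.hyps(3)] ising_weight_join[OF join.hyps]
        sum_distrib_left mult_ac)
  also have "\<dots> = (\<Sum>x1\<in>spins V1. ising_weight E1 \<theta> x1)"
  proof (intro sum.cong refl)
    fix x1
    show "ising_weight E1 \<theta> x1 *
        (\<Sum>x2\<in>spins V2. (1 + \<theta> {u, v} * x1 u * x2 v) / 2 * ising_weight E2 \<theta> x2) =
        ising_weight E1 \<theta> x1"
      using sum_edge_factor_times_ising_weight[OF joined_tree_edges_on[OF join.hyps(2)] join.hyps(5),
          of "\<theta> {u, v} * x1 u" \<theta>] join.IH(2) by simp
  qed
  finally show ?case using join.IH(1) by simp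
qed

lemma sum_edge_factor_joined_tree:
  assumes "joined_tree V E" "v \<in> V"
  shows "(\<Sum>x\<in>spins V. (1 + c * x v) / 2 * ising_weight E \<theta> x) = 1"
  using sum_edge_factor_times_ising_weight[OF joined_tree_edges_on[OF assms(1)] assms(2)]
    partition_sum_joined_tree[OF assms(1)] by simp

lemma abs_diff_triple_product_le:
  fixes a b X1 X2 Y1 Y2 :: real
  assumes "0 \<le> a" "0 \<le> X2" "0 \<le> Y1" "0 \<le> Y2"
  shows "\<bar>a * X1 * X2 - b * Y1 * Y2\<bar> \<le>
    \<bar>a - b\<bar> * Y1 * Y2 + a * \<bar>X1 - Y1\<bar> * X2 + a * Y1 * \<bar>X2 - Y2\<bar>"
proof -
  have "a * X1 * X2 - b * Y1 * Y2 = (a - b) * Y1 * Y2 + a * (X1 - Y1) * X2 + a * Y1 * (X2 - Y2)"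
    by (simp add: algebra_simps)
  also have "\<bar>\<dots>\<bar> \<le> \<bar>(a - b) * Y1 * Y2\<bar> + \<bar>a * (X1 - Y1) * X2\<bar> + \<bar>a * Y1 * (X2 - Y2)\<bar>"
    by (rule order_trans[OF abs_triangle_ineq add_right_mono[OF abs_triangle_ineq]])
  also have "\<dots> = \<bar>a - b\<bar> * Y1 * Y2 + a * \<bar>X1 - Y1\<bar> * X2 + a * Y1 * \<bar>X2 - Y2\<bar>"
    using assms by (simp add: abs_mult)
  finally show ?thesis .
qed

lemma abs_ising_weight_join_diff_le:
  assumes trees: "joined_tree V1 E1" "joined_tree V2 E2" "V1 \<inter> V2 = {}" "u \<in> V1" "v \<in> V2"
    and bounded: "\<forall>e\<in>insert {u, v} (E1 \<union> E2). \<bar>\<theta> e\<bar> \<le> 1 \<and> \<bar>\<theta>' e\<bar> \<le> 1"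
    and x: "x1 \<in> spins V1" "x2 \<in> spins V2"
  defines "a \<equiv> (1 + \<theta> {u, v} * (x1 u * x2 v)) / 2"
  shows "\<bar>ising_weight (insert {u, v} (E1 \<union> E2)) \<theta> (merge V1 x1 x2) -
      ising_weight (insert {u, v} (E1 \<union> E2)) \<theta>' (merge V1 x1 x2)\<bar> \<le>
    \<bar>\<theta> {u, v} - \<theta>' {u, v}\<bar> / 2 * ising_weight E1 \<theta>' x1 * ising_weight E2 \<theta>' x2 +
    a * \<bar>ising_weight E1 \<theta> x1 - ising_weight E1 \<theta>' x1\<bar> * ising_weight E2 \<theta> x2 +
    a * ising_weight E1 \<theta>' x1 * \<bar>ising_weight E2 \<theta> x2 - ising_weight E2 \<theta>' x2\<bar>"
proof -
  have "\<bar>x1 u\<bar> = 1" "\<bar>x2 v\<bar> = 1"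
    using spins_values[OF x(1) trees(4)] spins_values[OF x(2) trees(5)] by auto
  then have "\<bar>x1 u * x2 v\<bar> = 1" by (simp add: abs_mult)
  then have "\<bar>\<theta> {u, v} * (x1 u * x2 v)\<bar> \<le> 1"
    using bounded by (simp add: abs_mult)
  then have "0 \<le> a"
    unfolding a_def by (simp add: abs_le_iff)
  have diff: "a - (1 + \<theta>' {u, v} * (x1 u * x2 v)) / 2 = (\<theta> {u, v} - \<theta>' {u, v}) * (x1 u * x2 v) / 2"
    unfolding a_def by (simp add: field_simps)
  have abs_diff: "\<bar>a - (1 + \<theta>' {u, v} * (x1 u * x2 v)) / 2\<bar> = \<bar>\<theta> {u, v} - \<theta>' {u, v}\<bar> / 2"
    unfolding diff using \<open>\<bar>x1 u * x2 v\<bar> = 1\<close> by (simp only: abs_divide abs_mult)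
  have "0 \<le> ising_weight E2 \<theta> x2" "0 \<le> ising_weight E1 \<theta>' x1" "0 \<le> ising_weight E2 \<theta>' x2"
    using ising_weight_nonneg x joined_tree_edges_on trees(1,2) bounded by auto
  from abs_diff_triple_product_le[OF \<open>0 \<le> a\<close> this, of "ising_weight E1 \<theta> x1"
      "(1 + \<theta>' {u, v} * (x1 u * x2 v)) / 2"]
  show ?thesis
    unfolding ising_weight_join[OF trees] a_def[symmetric] abs_diff .
qed

lemma sum_abs_ising_weight_diff_join:
  assumes trees: "joined_tree V1 E1" "joined_tree V2 E2" "V1 \<inter> V2 = {}" "u \<in> V1" "v \<in> V2"
    and bounded: "\<forall>e\<in>insert {u, v} (E1 \<union> E2). \<bar>\<theta> e\<bar> \<le> 1 \<and> \<bar>\<theta>' e\<bar> \<le> 1"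
  defines "D \<equiv> \<lambda>V E. \<Sum>x\<in>spins V. \<bar>ising_weight E \<theta> x - ising_weight E \<theta>' x\<bar>"
  shows "D (V1 \<union> V2) (insert {u, v} (E1 \<union> E2)) \<le> 2 * \<bar>\<theta> {u, v} - \<theta>' {u, v}\<bar> + D V1 E1 + D V2 E2"
proof -
  define X1 where "X1 = ising_weight E1 \<theta>"
  define Y1 where "Y1 = ising_weight E1 \<theta>'"
  define X2 where "X2 = ising_weight E2 \<theta>"
  define Y2 where "Y2 = ising_weight E2 \<theta>'"
  define d where "d = \<bar>\<theta> {u, v} - \<theta>' {u, v}\<bar>"
  define a where "a x1 x2 = (1 + \<theta> {u, v} * (x1 u * x2 v)) / 2" for x1 x2 :: "nat \<Rightarrow> real"
  have "(\<Sum>x1\<in>spins V1. \<Sum>x2\<in>spins V2. d / 2 * Y1 x1 * Y2 x2) =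
      (\<Sum>x1\<in>spins V1. d / 2 * Y1 x1) * (\<Sum>x2\<in>spins V2. Y2 x2)"
    by (simp add: sum_product)
  also have "\<dots> = d / 2 * (\<Sum>x1\<in>spins V1. Y1 x1) * (\<Sum>x2\<in>spins V2. Y2 x2)"
    by (simp add: sum_distrib_left)
  finally have first: "(\<Sum>x1\<in>spins V1. \<Sum>x2\<in>spins V2. d / 2 * Y1 x1 * Y2 x2) = 2 * d"
    using partition_sum_joined_tree trees(1,2) unfolding Y1_def Y2_def by simp
  have "(\<Sum>x1\<in>spins V1. \<Sum>x2\<in>spins V2. a x1 x2 * \<bar>X1 x1 - Y1 x1\<bar> * X2 x2) =
      (\<Sum>x1\<in>spins V1. \<bar>X1 x1 - Y1 x1\<bar> * (\<Sum>x2\<in>spins V2. (1 + \<theta> {u, v} * x1 u * x2 v) / 2 * X2 x2))"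
    unfolding a_def by (simp add: sum_distrib_left mult_ac)
  then have second: "(\<Sum>x1\<in>spins V1. \<Sum>x2\<in>spins V2. a x1 x2 * \<bar>X1 x1 - Y1 x1\<bar> * X2 x2) = D V1 E1"
    using sum_edge_factor_joined_tree[OF trees(2,5)] by (simp add: D_def X1_def Y1_def X2_def)
  have "(\<Sum>x1\<in>spins V1. \<Sum>x2\<in>spins V2. a x1 x2 * Y1 x1 * \<bar>X2 x2 - Y2 x2\<bar>) =
      (\<Sum>x2\<in>spins V2. \<bar>X2 x2 - Y2 x2\<bar> * (\<Sum>x1\<in>spins V1. (1 + \<theta> {u, v} * x2 v * x1 u) / 2 * Y1 x1))"
    unfolding a_def by (subst sum.swap) (simp add: sum_distrib_left mult_ac)
  then have third: "(\<Sum>x1\<in>spins V1. \<Sum>x2\<in>spins V2. a x1 x2 * Y1 x1 * \<bar>X2 x2 - Y2 x2\<bar>) = D V2 E2"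
    using sum_edge_factor_joined_tree[OF trees(1,4)] by (simp add: D_def X2_def Y2_def Y1_def)
  have "D (V1 \<union> V2) (insert {u, v} (E1 \<union> E2)) \<le> (\<Sum>x1\<in>spins V1. \<Sum>x2\<in>spins V2.
      d / 2 * Y1 x1 * Y2 x2 + a x1 x2 * \<bar>X1 x1 - Y1 x1\<bar> * X2 x2 + a x1 x2 * Y1 x1 * \<bar>X2 x2 - Y2 x2\<bar>)"
    unfolding D_def sum_spins_Un[OF trees(3)] X1_def Y1_def X2_def Y2_def a_def d_def
    using abs_ising_weight_join_diff_le[OF trees bounded] by (intro sum_mono) blast
  also have "\<dots> = 2 * d + D V1 E1 + D V2 E2"
    unfolding first[symmetric] second[symmetric] third[symmetric] by (simp add: sum.distrib)
  finally show ?thesis unfolding d_def .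
qed

lemma sum_abs_ising_weight_diff_le:
  assumes "joined_tree V E" "\<forall>e\<in>E. \<bar>\<theta> e\<bar> \<le> 1" "\<forall>e\<in>E. \<bar>\<theta>' e\<bar> \<le> 1"
  shows "(\<Sum>x\<in>spins V. \<bar>ising_weight E \<theta> x - ising_weight E \<theta>' x\<bar>) \<le> 2 * (\<Sum>e\<in>E. \<bar>\<theta> e - \<theta>' e\<bar>)"
  using assms
proof (induction rule: joined_tree.induct)
  case (single r)
  then show ?case by (simp add: ising_weight_def)
next
  case (join V1 E1 V2 E2 u v)
  note disj = join_edges_disjoint[OF joined_tree_edges_on[OF join.hyps(1)]
      joined_tree_edges_on[OF join.hyps(2)] join.hyps(3-5)]
  have "finite E1" "finite E2"
    using join.hyps(1,2) joined_tree_finite by auto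
  with disj have "(\<Sum>e\<in>insert {u, v} (E1 \<union> E2). \<bar>\<theta> e - \<theta>' e\<bar>) =
      \<bar>\<theta> {u, v} - \<theta>' {u, v}\<bar> + (\<Sum>e\<in>E1. \<bar>\<theta> e - \<theta>' e\<bar>) + (\<Sum>e\<in>E2. \<bar>\<theta> e - \<theta>' e\<bar>)"
    by (simp add: sum.union_disjoint)
  with sum_abs_ising_weight_diff_join[OF join.hyps, of \<theta> \<theta>'] join.IH join.prems
  show ?case by fastforce
qed

section \<open>Leaf distributions\<close>

lemma ising_model_facts:
  assumes "ising_model n (V, E, \<theta>)"
  shows "joined_tree V E" "{1..n} \<subseteq> V" "\<forall>e\<in>E. \<bar>\<theta> e\<bar> \<le> 1"
  using assms unfolding ising_model_def is_tree_iff_joined_tree by (auto simp: abs_le_iff)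

lemma leaf_dist_joined_tree:
  assumes "joined_tree V E"
  shows "leaf_dist n (V, E, \<theta>) y = (\<Sum>x\<in>{x \<in> spins V. restrict x {1..n} = y}. ising_weight E \<theta> x) / 2"
  using partition_sum_joined_tree[OF assms] by (simp add: leaf_dist_def partition_fn_def)

lemma tv_dist_same_tree_le:
  assumes tree: "joined_tree V E" and leaves: "{1..n} \<subseteq> V"
    and "\<forall>e\<in>E. \<bar>\<theta> e\<bar> \<le> 1" "\<forall>e\<in>E. \<bar>\<theta>' e\<bar> \<le> 1"
  shows "tv_dist n (leaf_dist n (V, E, \<theta>)) (leaf_dist n (V, E, \<theta>')) \<le> (\<Sum>e\<in>E. \<bar>\<theta> e - \<theta>' e\<bar>) / 2"
proof -
  let ?fibre = "\<lambda>y. {x \<in> spins V. restrict x {1..n} = y}"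
  let ?d = "\<lambda>x. \<bar>ising_weight E \<theta> x - ising_weight E \<theta>' x\<bar>"
  have "finite V" using tree joined_tree_finite by blast
  have "\<bar>leaf_dist n (V, E, \<theta>) y - leaf_dist n (V, E, \<theta>') y\<bar> \<le> (\<Sum>x\<in>?fibre y. ?d x) / 2" for y
    unfolding leaf_dist_joined_tree[OF tree] diff_divide_distrib[symmetric] sum_subtractf[symmetric]
    by (simp add: sum_abs)
  then have "tv_dist n (leaf_dist n (V, E, \<theta>)) (leaf_dist n (V, E, \<theta>')) \<le>
      1 / 2 * (\<Sum>y\<in>spins {1..n}. (\<Sum>x\<in>?fibre y. ?d x) / 2)"
    unfolding tv_dist_def by (intro mult_left_mono sum_mono) auto
  also have "\<dots> = (\<Sum>y\<in>spins {1..n}. \<Sum>x\<in>?fibre y. ?d x) / 4"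
    by (simp add: sum_divide_distrib)
  also have "(\<Sum>y\<in>spins {1..n}. \<Sum>x\<in>?fibre y. ?d x) = (\<Sum>x\<in>spins V. ?d x)"
  proof (rule sum.group)
    show "(\<lambda>x. restrict x {1..n}) ` spins V \<subseteq> spins {1..n}"
      using leaves unfolding spins_def by (auto simp: PiE_iff)
  qed (simp_all add: finite_spins \<open>finite V\<close>)
  also have "\<dots> \<le> 2 * (\<Sum>e\<in>E. \<bar>\<theta> e - \<theta>' e\<bar>)"
    using sum_abs_ising_weight_diff_le assms by blast
  finally show ?thesis by simp
qed

section \<open>Relabelling inner vertices\<close>

lemma sum_degree:
  assumes "finite V" "edges_on V E"
  shows "(\<Sum>v\<in>V. degree E v) = 2 * card E"
proof -
  have "finite E"
    using assms edges_onD(1) finite_subset[of E "Pow V"] by blast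
  have "(\<Sum>v\<in>V. degree E v) = (\<Sum>v\<in>V. \<Sum>e\<in>E. if v \<in> e then 1 else 0)"
    unfolding degree_def using \<open>finite E\<close> by (simp add: sum.If_cases Int_def)
  also have "\<dots> = (\<Sum>e\<in>E. card (V \<inter> e))"
    by (subst sum.swap) (simp add: sum.If_cases assms(1) Int_def)
  also have "\<dots> = (\<Sum>e\<in>E. card e)"
    using edges_onD(1)[OF assms(2)] by (intro sum.cong refl) (simp add: Int_absorb1)
  also have "\<dots> = 2 * card E"
    using edges_onD(2)[OF assms(2)] by simp
  finally show ?thesis .
qed

text \<open>Every inner vertex has degree 3, so the degree sum \<open>2 (|V| - 1)\<close> is at least \<open>3 (|V| - n)\<close>.\<close>
lemma ising_model_card_vertices:
  assumes "ising_model n (V, E, \<theta>)"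
  shows "card V + 2 \<le> 3 * n"
proof -
  note facts = ising_model_facts[OF assms]
  have inner: "\<forall>v\<in>V - {1..n}. degree E v = 3"
    using assms unfolding ising_model_def by auto
  have "finite V" and ok: "edges_on V E" and "card V = card E + 1"
    using facts(1) joined_tree_finite joined_tree_edges_on joined_tree_card by auto
  have "3 * card (V - {1..n}) = (\<Sum>v\<in>V - {1..n}. degree E v)"
    using inner by simp
  also have "\<dots> \<le> (\<Sum>v\<in>V. degree E v)"
    using \<open>finite V\<close> by (intro sum_mono2) auto
  also have "\<dots> = 2 * card E"
    using sum_degree[OF \<open>finite V\<close> ok] .
  finally show ?thesis
    using \<open>card V = card E + 1\<close> facts(2) \<open>finite V\<close> card_mono[OF \<open>finite V\<close> facts(2)]
    by (simp add: card_Diff_subset)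
qed

lemma joined_tree_image: "joined_tree V E \<Longrightarrow> inj_on f V \<Longrightarrow> joined_tree (f ` V) ((`) f ` E)"
proof (induction rule: joined_tree.induct)
  case (single r)
  then show ?case using joined_tree.single by simp
next
  case (join V1 E1 V2 E2 u v)
  have "inj_on f V1" "inj_on f V2"
    using join.prems by (auto intro: inj_on_subset)
  moreover have "f ` V1 \<inter> f ` V2 = {}"
    using join.prems join.hyps(3) by (auto simp: inj_on_def)
  ultimately have "joined_tree (f ` V1 \<union> f ` V2) (insert {f u, f v} ((`) f ` E1 \<union> (`) f ` E2))"
    using joined_tree.join[OF join.IH(1) join.IH(2)] join.hyps(4,5) by blast
  then show ?case by (simp add: image_Un)
qed

lemma inj_on_image_edges: "inj_on f V \<Longrightarrow> edges_on V E \<Longrightarrow> inj_on ((`) f) E"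
  using inj_on_image_Pow edges_onD(1) by (meson PowI inj_on_subset subsetI)

lemma degree_image:
  assumes "inj_on f V" "edges_on V E" "w \<in> V"
  shows "degree ((`) f ` E) (f w) = degree E w"
proof -
  have inj: "inj_on ((`) f) E"
    using inj_on_image_edges[OF assms(1,2)] .
  have "{e \<in> (`) f ` E. f w \<in> e} = (`) f ` {e \<in> E. w \<in> e}"
  proof (intro equalityI subsetI)
    fix e' assume "e' \<in> {e \<in> (`) f ` E. f w \<in> e}"
    then obtain e where e: "e \<in> E" "e' = f ` e" "f w \<in> f ` e" by blast
    then have "w \<in> e"
      using inj_on_image_mem_iff[OF assms(1,3) edges_onD(1)[OF assms(2) e(1)]] by simp
    with e show "e' \<in> (`) f ` {e \<in> E. w \<in> e}" by blast
  qed auto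
  then show ?thesis
    unfolding degree_def using inj by (simp add: card_image inj_on_subset)
qed

definition relabel :: "(nat \<Rightarrow> nat) \<Rightarrow> ising \<Rightarrow> ising" where
  "relabel f M = (case M of (V, E, \<theta>) \<Rightarrow> (f ` V, (`) f ` E, \<lambda>e. \<theta> (inv_into V f ` e)))"

lemma ising_model_relabel:
  assumes model: "ising_model n (V, E, \<theta>)" and inj: "inj_on f V" and id_leaves: "\<forall>i\<in>{1..n}. f i = i"
  shows "ising_model n (relabel f (V, E, \<theta>))"
proof -
  note facts = ising_model_facts[OF model]
  have ok: "edges_on V E" using facts(1) joined_tree_edges_on by blast
  have leaf_iff: "f w \<in> {1..n} \<longleftrightarrow> w \<in> {1..n}" if "w \<in> V" for w
    using id_leaves facts(2) inj that by (metis inj_on_contraD subsetD)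
  have "{v \<in> f ` V. degree ((`) f ` E) v \<le> 1} = f ` {v \<in> V. degree E v \<le> 1}"
    using degree_image[OF inj ok] by auto
  also have "\<dots> = {1..n}"
    using model id_leaves unfolding ising_model_def by force
  finally have leaves: "{v \<in> f ` V. degree ((`) f ` E) v \<le> 1} = {1..n}" .
  have inner: "\<forall>v\<in>f ` V. v \<notin> {1..n} \<longrightarrow> degree ((`) f ` E) v = 3"
    using model leaf_iff degree_image[OF inj ok] unfolding ising_model_def by auto
  have "inv_into V f ` f ` e = e" if "e \<in> E" for e
    using inv_into_image_cancel[OF inj edges_onD(1)[OF ok that]] .
  then have "\<forall>e'\<in>(`) f ` E. -1 \<le> \<theta> (inv_into V f ` e') \<and> \<theta> (inv_into V f ` e') \<le> 1"
    using facts(3) by (auto simp: abs_le_iff)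
  moreover have "is_tree (f ` V) ((`) f ` E)"
    using joined_tree_image[OF facts(1) inj] is_tree_iff_joined_tree by blast
  ultimately show ?thesis
    unfolding relabel_def ising_model_def using leaves inner by simp
qed

lemma bij_betw_relabel_spins:
  assumes "inj_on f V"
  shows "bij_betw (\<lambda>x. \<lambda>j\<in>f ` V. x (inv_into V f j)) (spins V) (spins (f ` V))"
proof (rule bij_betwI[where g = "\<lambda>y. restrict (y \<circ> f) V"])
  show "(\<lambda>x. \<lambda>j\<in>f ` V. x (inv_into V f j)) \<in> spins V \<rightarrow> spins (f ` V)"
    unfolding spins_def by (auto simp: PiE_iff inv_into_into)
  show "(\<lambda>y. restrict (y \<circ> f) V) \<in> spins (f ` V) \<rightarrow> spins V"
    unfolding spins_def by (auto simp: PiE_iff)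
  show "restrict ((\<lambda>j\<in>f ` V. x (inv_into V f j)) \<circ> f) V = x" if "x \<in> spins V" for x
    using that assms unfolding spins_def by (auto simp: PiE_iff extensional_def fun_eq_iff)
  show "(\<lambda>j\<in>f ` V. restrict (y \<circ> f) V (inv_into V f j)) = y" if "y \<in> spins (f ` V)" for y
    using that assms unfolding spins_def
    by (auto simp: PiE_iff extensional_def fun_eq_iff inv_into_into f_inv_into_f)
qed

lemma ising_weight_relabel:
  assumes inj: "inj_on f V" and ok: "edges_on V E"
  shows "ising_weight ((`) f ` E) (\<lambda>e. \<theta> (inv_into V f ` e)) (\<lambda>j\<in>f ` V. x (inv_into V f j)) =
    ising_weight E \<theta> x"
proof -
  have "inj_on ((`) f) E"
    using inj_on_image_edges[OF inj ok] .
  moreover have "(\<Prod>j\<in>f ` e. (\<lambda>j\<in>f ` V. x (inv_into V f j)) j) = (\<Prod>w\<in>e. x w)"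
    and "inv_into V f ` f ` e = e" if "e \<in> E" for e
    using edges_onD(1)[OF ok that] inj inv_into_image_cancel[OF inj]
    by (auto simp: prod.reindex inj_on_subset intro!: prod.cong)
  ultimately show ?thesis
    unfolding ising_weight_def by (simp add: prod.reindex)
qed

lemma leaf_dist_relabel:
  assumes model: "ising_model n (V, E, \<theta>)" and inj: "inj_on f V" and id_leaves: "\<forall>i\<in>{1..n}. f i = i"
  shows "leaf_dist n (relabel f (V, E, \<theta>)) = leaf_dist n (V, E, \<theta>)"
proof
  fix y
  note facts = ising_model_facts[OF model]
  let ?\<phi> = "\<lambda>x. \<lambda>j\<in>f ` V. x (inv_into V f j)"
  have ok: "edges_on V E" and "finite V"
    using facts(1) joined_tree_edges_on joined_tree_finite by auto
  have leaves: "restrict (?\<phi> x) {1..n} = restrict x {1..n}" for x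
  proof -
    have "i \<in> f ` V" "inv_into V f i = i" if "i \<in> {1..n}" for i
      using that id_leaves facts(2) inv_into_f_f[OF inj] by (force, metis subsetD)
    then show ?thesis by (auto simp: fun_eq_iff)
  qed
  let ?W' = "ising_weight ((`) f ` E) (\<lambda>e. \<theta> (inv_into V f ` e))"
  have "(\<Sum>x'\<in>spins (f ` V). if restrict x' {1..n} = y then ?W' x' else 0) =
      (\<Sum>x\<in>spins V. if restrict (?\<phi> x) {1..n} = y then ?W' (?\<phi> x) else 0)"
    by (rule sum.reindex_bij_betw[OF bij_betw_relabel_spins[OF inj], symmetric])
  also have "\<dots> = (\<Sum>x\<in>spins V. if restrict x {1..n} = y then ising_weight E \<theta> x else 0)"
    by (simp only: leaves ising_weight_relabel[OF inj ok])
  finally show "leaf_dist n (relabel f (V, E, \<theta>)) y = leaf_dist n (V, E, \<theta>) y"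
    using joined_tree_image[OF facts(1) inj] facts(1) finite_spins \<open>finite V\<close>
    by (simp add: relabel_def leaf_dist_joined_tree sum.inter_filter)
qed

lemma inj_fixing_into:
  assumes "finite V" "finite B" "A \<subseteq> V" "A \<subseteq> B" "card V \<le> card B"
  obtains f where "inj_on f V" "\<forall>a\<in>A. f a = a" "f ` V \<subseteq> B"
proof -
  have "finite A" using assms(1,3) finite_subset by blast
  with assms have "card (V - A) \<le> card (B - A)"
    by (simp add: card_Diff_subset)
  then obtain g where g: "g ` (V - A) \<subseteq> B - A" "inj_on g (V - A)"
    using card_le_inj[of "V - A" "B - A"] assms by auto
  define f where "f a = (if a \<in> A then a else g a)" for a
  have "inj_on f V"
  proof (rule inj_onI)
    fix a b assume "a \<in> V" "b \<in> V" "f a = f b"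
    with g show "a = b" unfolding f_def inj_on_def by (auto split: if_splits)
  qed
  moreover have "f ` V \<subseteq> B"
    using g assms(4) unfolding f_def by auto
  ultimately show ?thesis using that unfolding f_def by simp
qed

section \<open>Existence of models\<close>

lemma joined_tree_add_leaf:
  assumes "joined_tree V E" "u \<in> V" "w \<notin> V"
  shows "joined_tree (insert w V) (insert {u, w} E)"
  using joined_tree.join[OF assms(1) joined_tree.single[of w]] assms(2,3) by simp

lemma degree_add_leaf:
  assumes "joined_tree V E" "w \<notin> V"
  shows "degree (insert {u, w} E) x = degree E x + (if x = u \<or> x = w then 1 else 0)"
proof -
  have "{u, w} \<notin> E" "finite E"
    using assms joined_tree_edges_on[OF assms(1)] joined_tree_finite edges_onD(1) by blast+
  moreover have "{e \<in> insert {u, w} E. x \<in> e} =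
      (if x = u \<or> x = w then insert {u, w} {e \<in> E. x \<in> e} else {e \<in> E. x \<in> e})"
    by auto
  ultimately show ?thesis
    unfolding degree_def by simp
qed

lemma degree_empty [simp]: "degree {} x = 0"
  by (simp add: degree_def)

lemma ising_modelI:
  assumes "joined_tree V E" "{1..n} \<subseteq> V" "\<forall>e\<in>E. \<bar>\<theta> e\<bar> \<le> 1"
    and "\<forall>x\<in>V. if x \<in> {1..n} then degree E x \<le> 1 else degree E x = 3"
  shows "ising_model n (V, E, \<theta>)"
  using assms unfolding ising_model_def is_tree_iff_joined_tree
  by (auto simp: abs_le_iff split: if_splits)

text \<open>A path \<open>n + 1, \<dots>, n + j\<close> of inner vertices carrying the leaves \<open>1, \<dots>, j + 1\<close>;
  only its last inner vertex still has degree 2.\<close>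
lemma caterpillar:
  assumes "1 \<le> j" "j + 1 \<le> n"
  shows "\<exists>E. joined_tree ({1..j + 1} \<union> {n + 1..n + j}) E \<and>
    (\<forall>x. degree E x = (if x \<in> {1..j + 1} then 1 else if x = n + j then 2
                        else if x \<in> {n + 1..n + j} then 3 else 0))"
  using assms
proof (induction j rule: nat_induct_at_least)
  case base
  let ?E = "insert {n + 1, 2} (insert {n + 1, 1} {})"
  have tree1: "joined_tree (insert 1 {n + 1}) (insert {n + 1, 1} {})"
    using joined_tree_add_leaf[of "{n + 1}" "{}" "n + 1" 1] joined_tree.single base by simp
  have tree2: "joined_tree (insert 2 (insert 1 {n + 1})) ?E"
    using joined_tree_add_leaf[OF tree1, of "n + 1" 2] base by simp
  have "degree ?E x = degree (insert {n + 1, 1} {}) x + (if x = n + 1 \<or> x = 2 then 1 else 0)" for x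
    by (rule degree_add_leaf[OF tree1]) (use base in auto)
  moreover have "degree (insert {n + 1, 1} {}) x = (if x = n + 1 \<or> x = 1 then 1 else 0)" for x
    by (subst degree_add_leaf[OF joined_tree.single[of "n + 1"]]) (use base in auto)
  ultimately have "degree ?E x = (if x \<in> {1..2} then 1 else if x = n + 1 then 2 else 0)" for x
    using base by auto
  moreover have "insert 2 (insert 1 {n + 1}) = {1..1 + 1} \<union> {n + 1..n + 1}"
    by auto
  ultimately show ?case using tree2 by auto
next
  case (Suc j)
  let ?V = "{1..j + 1} \<union> {n + 1..n + j}"
  obtain E where tree: "joined_tree ?V E" and deg: "\<forall>x. degree E x =
      (if x \<in> {1..j + 1} then 1 else if x = n + j then 2 else if x \<in> {n + 1..n + j} then 3 else 0)"
    using Suc by auto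
  let ?E1 = "insert {n + j, n + j + 1} E"
  let ?E2 = "insert {n + j + 1, j + 2} ?E1"
  have tree1: "joined_tree (insert (n + j + 1) ?V) ?E1"
    using joined_tree_add_leaf[OF tree] Suc by simp
  have tree2: "joined_tree (insert (j + 2) (insert (n + j + 1) ?V)) ?E2"
    using joined_tree_add_leaf[OF tree1] Suc by simp
  have "degree ?E2 x = (if x \<in> {1..Suc j + 1} then 1 else if x = n + Suc j then 2
      else if x \<in> {n + 1..n + Suc j} then 3 else 0)" for x
  proof -
    have "degree ?E2 x = degree ?E1 x + (if x = n + j + 1 \<or> x = j + 2 then 1 else 0)"
      by (rule degree_add_leaf[OF tree1]) (use Suc in auto)
    moreover have "degree ?E1 x = degree E x + (if x = n + j \<or> x = n + j + 1 then 1 else 0)"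
      by (rule degree_add_leaf[OF tree]) (use Suc in auto)
    ultimately show ?thesis using Suc deg by auto
  qed
  moreover have "insert (j + 2) (insert (n + j + 1) ?V) = {1..Suc j + 1} \<union> {n + 1..n + Suc j}"
    using Suc by auto
  ultimately show ?case using tree2 by auto
qed

lemma exists_ising_model:
  assumes "1 \<le> n"
  shows "\<exists>V E. ising_model n (V, E, \<lambda>_. 0)"
proof -
  consider "n = 1" | "n = 2" | "3 \<le> n" using assms by linarith
  then show ?thesis
  proof cases
    case 1
    have "ising_model n ({1}, {}, \<lambda>_. 0)"
      using 1 by (intro ising_modelI joined_tree.single) auto
    then show ?thesis by blast
  next
    case 2
    have tree: "joined_tree {2, 1} {{1, 2}}"
      using joined_tree_add_leaf[of "{1}" "{}" 1 2] joined_tree.single by simp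
    have "degree (insert {1, 2} {}) x = (if x = 1 \<or> x = 2 then 1 else 0)" for x
      by (subst degree_add_leaf[OF joined_tree.single[of 1]]) auto
    then have "ising_model n ({2, 1}, {{1, 2}}, \<lambda>_. 0)"
      using 2 by (intro ising_modelI tree) auto
    then show ?thesis by blast
  next
    case 3
    define c where "c = n + (n - 2)"
    let ?V = "{1..n - 2 + 1} \<union> {n + 1..c}"
    have "\<exists>E. joined_tree ?V E \<and> (\<forall>x. degree E x = (if x \<in> {1..n - 2 + 1} then 1
        else if x = c then 2 else if x \<in> {n + 1..c} then 3 else 0))"
      unfolding c_def by (rule caterpillar) (use 3 in auto)
    then obtain E where tree: "joined_tree ?V E" and deg: "\<forall>x. degree E x =
        (if x \<in> {1..n - 2 + 1} then 1 else if x = c then 2 else if x \<in> {n + 1..c} then 3 else 0)"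
      by blast
    have c: "n + 1 \<le> c" "n \<notin> ?V" using 3 unfolding c_def by auto
    note deg' = degree_add_leaf[OF tree c(2), of c]
    have "ising_model n (insert n ?V, insert {c, n} E, \<lambda>_. 0)"
      using 3 c deg by (intro ising_modelI joined_tree_add_leaf[OF tree]) (auto simp: deg')
    then show ?thesis by blast
  qed
qed

section \<open>Models with weights on a grid\<close>

definition grid :: "nat \<Rightarrow> real set" where
  "grid N = (\<lambda>k. of_int k / real N) ` {- int N..int N}"

lemma finite_grid: "finite (grid N)"
  unfolding grid_def by simp

lemma card_grid_le: "card (grid N) \<le> 2 * N + 1"
proof -
  have "card (grid N) \<le> card {- int N..int N}"
    unfolding grid_def by (rule card_image_le) simp
  then show ?thesis by simp
qed

lemma abs_le_one_if_in_grid: "t \<in> grid N \<Longrightarrow> \<bar>t\<bar> \<le> 1"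
  unfolding grid_def by (cases "N = 0") (auto simp: abs_le_iff field_simps)

lemma round_down_to_grid:
  assumes "0 < N" "\<bar>t\<bar> \<le> 1"
  shows "of_int \<lfloor>real N * t\<rfloor> / real N \<in> grid N"
    and "\<bar>t - of_int \<lfloor>real N * t\<rfloor> / real N\<bar> \<le> 1 / real N"
proof -
  have "- real N \<le> real N * t" "real N * t \<le> real N"
    using assms mult_left_mono[of t 1 "real N"] mult_left_mono[of "-1" t "real N"]
    by (auto simp: abs_le_iff)
  then have "\<lfloor>real N * t\<rfloor> \<in> {- int N..int N}"
    by (simp add: le_floor_iff floor_le_iff)
  then show "of_int \<lfloor>real N * t\<rfloor> / real N \<in> grid N"
    unfolding grid_def by blast
  have "0 \<le> real N * t - of_int \<lfloor>real N * t\<rfloor>" "real N * t - of_int \<lfloor>real N * t\<rfloor> \<le> 1"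
    by linarith+
  moreover have "t - of_int \<lfloor>real N * t\<rfloor> / real N = (real N * t - of_int \<lfloor>real N * t\<rfloor>) / real N"
    using assms(1) by (simp add: field_simps)
  ultimately show "\<bar>t - of_int \<lfloor>real N * t\<rfloor> / real N\<bar> \<le> 1 / real N"
    by (simp add: divide_right_mono)
qed

text \<open>Weights vanish off the edges, so a model is determined by its vertices and weighted edges.\<close>
definition grid_models :: "nat \<Rightarrow> nat \<Rightarrow> nat \<Rightarrow> ising set" where
  "grid_models n m N = {(V, E, \<theta>) | V E \<theta>. ising_model n (V, E, \<theta>) \<and> V \<subseteq> {1..m} \<and>
     (\<forall>e\<in>E. \<theta> e \<in> grid N) \<and> (\<forall>e. e \<notin> E \<longrightarrow> \<theta> e = 0)}"

lemma ising_model_change_weights: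
  assumes "ising_model n (V, E, \<theta>)" "\<forall>e\<in>E. \<bar>\<rho> e\<bar> \<le> 1"
  shows "ising_model n (V, E, \<rho>)"
  using assms unfolding ising_model_def by (auto simp: abs_le_iff)

lemma round_into_grid_models:
  assumes model: "ising_model n (V, E, \<theta>)" and "V \<subseteq> {1..m}" "0 < N"
  shows "\<exists>M'\<in>grid_models n m N.
    tv_dist n (leaf_dist n (V, E, \<theta>)) (leaf_dist n M') \<le> real (card E) / (2 * real N)"
proof -
  note facts = ising_model_facts[OF model]
  define \<rho> where "\<rho> e = (if e \<in> E then of_int \<lfloor>real N * \<theta> e\<rfloor> / real N else 0)" for e
  have grid: "\<forall>e\<in>E. \<rho> e \<in> grid N" and error: "\<forall>e\<in>E. \<bar>\<theta> e - \<rho> e\<bar> \<le> 1 / real N"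
    using round_down_to_grid[OF \<open>0 < N\<close>] facts(3) unfolding \<rho>_def by auto
  have rounded: "ising_model n (V, E, \<rho>)"
    using ising_model_change_weights[OF model] grid abs_le_one_if_in_grid by blast
  then have "(V, E, \<rho>) \<in> grid_models n m N"
    using \<open>V \<subseteq> {1..m}\<close> grid unfolding grid_models_def by (auto simp: \<rho>_def)
  moreover have "tv_dist n (leaf_dist n (V, E, \<theta>)) (leaf_dist n (V, E, \<rho>)) \<le> (\<Sum>e\<in>E. \<bar>\<theta> e - \<rho> e\<bar>) / 2"
    using tv_dist_same_tree_le[OF facts ising_model_facts(3)[OF rounded]] .
  moreover have "(\<Sum>e\<in>E. \<bar>\<theta> e - \<rho> e\<bar>) \<le> real (card E) * (1 / real N)"
    using sum_bounded_above[of E "\<lambda>e. \<bar>\<theta> e - \<rho> e\<bar>" "1 / real N"] error by simp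
  ultimately show ?thesis
    by (intro bexI[of _ "(V, E, \<rho>)"]) (simp_all add: divide_right_mono)
qed

lemma grid_models_cover:
  assumes model: "ising_model n M" and "0 < N"
  shows "\<exists>M'\<in>grid_models n (3 * n) N.
    tv_dist n (leaf_dist n M) (leaf_dist n M') \<le> 3 * real n / (2 * real N)"
proof -
  obtain V E \<theta> where M: "M = (V, E, \<theta>)" by (cases M)
  note facts = ising_model_facts[OF model[unfolded M]]
  have "finite V" using facts(1) joined_tree_finite by blast
  moreover have "card V \<le> card {1..3 * n}"
    using ising_model_card_vertices[OF model[unfolded M]] by simp
  ultimately obtain f where f: "inj_on f V" "\<forall>i\<in>{1..n}. f i = i" "f ` V \<subseteq> {1..3 * n}"
    using inj_fixing_into[of V "{1..3 * n}" "{1..n}"] facts(2) by auto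
  obtain V' E' \<theta>' where relabelled: "relabel f (V, E, \<theta>) = (V', E', \<theta>')" and "V' = f ` V"
    unfolding relabel_def by simp
  have model': "ising_model n (V', E', \<theta>')"
    using ising_model_relabel[OF model[unfolded M] f(1,2)] relabelled by simp
  have same: "leaf_dist n M = leaf_dist n (V', E', \<theta>')"
    using leaf_dist_relabel[OF model[unfolded M] f(1,2)] relabelled M by simp
  have "card E' + 1 \<le> 3 * n"
    using joined_tree_card[OF ising_model_facts(1)[OF model']]
      card_mono[OF finite_atLeastAtMost, of V' 1 "3 * n"] f(3) \<open>V' = f ` V\<close> by simp
  then have small: "real (card E') / (2 * real N) \<le> 3 * real n / (2 * real N)"
    by (simp add: divide_right_mono)
  obtain M' where "M' \<in> grid_models n (3 * n) N"
    and close: "tv_dist n (leaf_dist n (V', E', \<theta>')) (leaf_dist n M') \<le> real (card E') / (2 * real N)"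
    using round_into_grid_models[OF model' _ \<open>0 < N\<close>] f(3) \<open>V' = f ` V\<close> by blast
  then show ?thesis
    unfolding same using small by (intro bexI[of _ M']) linarith
qed

text \<open>A set of at most \<open>k\<close> elements of \<open>P\<close> is the set of \<open>Some\<close>-entries of a list of length \<open>k\<close>
  over \<open>P\<close> padded with \<open>None\<close>.\<close>
lemma card_subsets_card_le:
  assumes "finite P"
  shows "card {A. A \<subseteq> P \<and> card A \<le> k} \<le> (card P + 1) ^ k"
proof -
  let ?L = "{xs. set xs \<subseteq> insert None (Some ` P) \<and> length xs = k}"
  have "{A. A \<subseteq> P \<and> card A \<le> k} \<subseteq> (\<lambda>xs. Some -` set xs) ` ?L"
  proof
    fix A assume A: "A \<in> {A. A \<subseteq> P \<and> card A \<le> k}"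
    then obtain ys where ys: "set ys = A" "distinct ys"
      using finite_distinct_list finite_subset assms by blast
    then have "length ys \<le> k" using A distinct_card by fastforce
    then have padded: "map Some ys @ replicate (k - length ys) None \<in> ?L"
      using A ys by auto
    have "Some -` set (map Some ys @ replicate (k - length ys) None) = A"
      using ys by auto
    from image_eqI[where f = "\<lambda>xs. Some -` set xs", OF this[symmetric] padded] show "A \<in> (\<lambda>xs. Some -` set xs) ` ?L" .
  qed
  moreover have "finite ?L"
    using assms by (simp add: finite_lists_length_eq)
  ultimately have "card {A. A \<subseteq> P \<and> card A \<le> k} \<le> card ((\<lambda>xs. Some -` set xs) ` ?L)"
    by (simp add: card_mono)
  also have "\<dots> \<le> card ?L"
    using \<open>finite ?L\<close> by (rule card_image_le)
  also have "\<dots> = (card P + 1) ^ k"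
    using assms by (simp add: card_lists_length_eq card_image)
  finally show ?thesis .
qed

lemma card_pairs_times_grid_le:
  "card ({e. e \<subseteq> {1..m} \<and> card e = 2} \<times> grid N) \<le> m\<^sup>2 * (2 * N + 1)"
proof -
  have "card {e. e \<subseteq> {1..m} \<and> card e = 2} = m choose 2"
    using n_subsets[of "{1..m}" 2] by simp
  also have "\<dots> \<le> m\<^sup>2"
    by (cases "2 \<le> m") (auto simp: binomial_le_pow binomial_eq_0)
  finally show ?thesis
    unfolding card_cartesian_product using mult_le_mono[OF _ card_grid_le] by blast
qed

lemma grid_models_injective:
  assumes "(V, E, \<theta>) \<in> grid_models n m N" "(V', E', \<theta>') \<in> grid_models n m N"
    and "V = V'" "(\<lambda>e. (e, \<theta> e)) ` E = (\<lambda>e. (e, \<theta>' e)) ` E'"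
  shows "(V, E, \<theta>) = (V', E', \<theta>')"
proof -
  have "E = E'"
    using arg_cong[OF assms(4), of "image fst"] by (simp add: image_image)
  moreover have "\<theta> e = \<theta>' e" for e
  proof (cases "e \<in> E")
    case True
    then have "(e, \<theta> e) \<in> (\<lambda>e. (e, \<theta>' e)) ` E'" using assms(4) by blast
    then show ?thesis by auto
  next
    case False
    then show ?thesis using assms(1,2) \<open>E = E'\<close> unfolding grid_models_def by auto
  qed
  ultimately show ?thesis using assms(3) by auto
qed

lemma grid_models_weighted_edges:
  assumes "(V, E, \<theta>) \<in> grid_models n m N"
  shows "V \<subseteq> {1..m}" and "(\<lambda>e. (e, \<theta> e)) ` E \<subseteq> {e. e \<subseteq> {1..m} \<and> card e = 2} \<times> grid N"
    and "card ((\<lambda>e. (e, \<theta> e)) ` E) \<le> m"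
proof -
  have model: "ising_model n (V, E, \<theta>)" and V: "V \<subseteq> {1..m}" and "\<forall>e\<in>E. \<theta> e \<in> grid N"
    using assms unfolding grid_models_def by auto
  note tree = ising_model_facts(1)[OF model]
  show "V \<subseteq> {1..m}" by (fact V)
  show "(\<lambda>e. (e, \<theta> e)) ` E \<subseteq> {e. e \<subseteq> {1..m} \<and> card e = 2} \<times> grid N"
    using joined_tree_edges_on[OF tree] V \<open>\<forall>e\<in>E. \<theta> e \<in> grid N\<close>
    unfolding edges_on_def by auto
  have "finite E" using tree joined_tree_finite by blast
  have "card E < card V" using joined_tree_card[OF tree] by simp
  also have "\<dots> \<le> m" using card_mono[OF _ V] by simp
  finally show "card ((\<lambda>e. (e, \<theta> e)) ` E) \<le> m"
    using card_image_le[OF \<open>finite E\<close>, of "\<lambda>e. (e, \<theta> e)"] by linarith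
qed

lemma card_grid_models_le:
  shows "finite (grid_models n m N)"
    and "card (grid_models n m N) \<le> (2 * (m\<^sup>2 * (2 * N + 1) + 1)) ^ m"
proof -
  define P where "P = {e. e \<subseteq> {1..m} \<and> card e = 2} \<times> grid N"
  define T where "T = Pow {1..m} \<times> {A. A \<subseteq> P \<and> card A \<le> m}"
  define code :: "ising \<Rightarrow> nat set \<times> (nat set \<times> real) set"
    where "code = (\<lambda>(V, E, \<theta>). (V, (\<lambda>e. (e, \<theta> e)) ` E))"
  have "finite P"
    unfolding P_def by (intro finite_cartesian_product finite_grid) (auto intro: finite_subset)
  have "card P \<le> m\<^sup>2 * (2 * N + 1)"
    unfolding P_def by (rule card_pairs_times_grid_le)
  have inj: "inj_on code (grid_models n m N)"
  proof (rule inj_onI)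
    fix M M' assume M: "M \<in> grid_models n m N" and M': "M' \<in> grid_models n m N"
      and "code M = code M'"
    obtain V E \<theta> V' E' \<theta>' where "M = (V, E, \<theta>)" "M' = (V', E', \<theta>')"
      by (cases M, cases M')
    with M M' \<open>code M = code M'\<close> show "M = M'"
      unfolding code_def using grid_models_injective by simp
  qed
  have into: "code ` grid_models n m N \<subseteq> T"
  proof (rule image_subsetI)
    fix M assume "M \<in> grid_models n m N"
    moreover obtain V E \<theta> where "M = (V, E, \<theta>)" by (cases M)
    ultimately show "code M \<in> T"
      using grid_models_weighted_edges[of V E \<theta>] unfolding code_def T_def P_def by simp
  qed
  have "finite T" unfolding T_def using \<open>finite P\<close> by simp
  then have "finite (code ` grid_models n m N)" using into by (rule finite_subset[rotated])
  then show "finite (grid_models n m N)" using finite_imageD inj by blast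
  have "card (grid_models n m N) \<le> card T"
    using card_inj_on_le[OF inj into \<open>finite T\<close>] .
  also have "\<dots> \<le> 2 ^ m * (card P + 1) ^ m"
    unfolding T_def using card_subsets_card_le[OF \<open>finite P\<close>, of m]
    by (simp add: card_cartesian_product card_Pow)
  also have "\<dots> \<le> 2 ^ m * (m\<^sup>2 * (2 * N + 1) + 1) ^ m"
    using \<open>card P \<le> m\<^sup>2 * (2 * N + 1)\<close> by (simp add: power_mono)
  also have "\<dots> = (2 * (m\<^sup>2 * (2 * N + 1) + 1)) ^ m"
    by (rule power_mult_distrib[symmetric])
  finally show "card (grid_models n m N) \<le> (2 * (m\<^sup>2 * (2 * N + 1) + 1)) ^ m" .
qed

lemma card_grid_models_one_leaf: "card (grid_models 1 m N) \<le> 1"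
proof -
  have "M = ({1}, {}, \<lambda>_. 0)" if M_in: "M \<in> grid_models 1 m N" for M
  proof -
    obtain V E \<theta> where M: "M = (V, E, \<theta>)" and model: "ising_model 1 (V, E, \<theta>)"
      and zero: "\<forall>e. e \<notin> E \<longrightarrow> \<theta> e = 0"
      using M_in unfolding grid_models_def by auto
    note tree = ising_model_facts(1)[OF model]
    have "card V \<le> 1" "1 \<in> V" "finite V"
      using ising_model_card_vertices[OF model] ising_model_facts(2)[OF model]
        joined_tree_finite[OF tree] by auto
    then have "V = {1}" using card_le_Suc0_iff_eq[of V] by auto
    moreover have "E = {}"
      using joined_tree_card[OF tree] joined_tree_finite[OF tree] \<open>V = {1}\<close> by simp
    ultimately show ?thesis using M zero by auto
  qed
  then have "grid_models 1 m N \<subseteq> {({1}, {}, \<lambda>_. 0)}" by blast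
  from card_mono[OF _ this] show ?thesis by simp
qed

lemma ln_mono_nonneg:
  fixes x y :: real
  assumes "0 \<le> x" "x \<le> y" "1 \<le> y"
  shows "ln x \<le> ln y"
  using assms by (cases "x = 0") (auto intro: ln_mono)

lemma grid_count_base_le:
  fixes q :: real
  assumes "2 \<le> q" "real m \<le> 3 * q" "real N \<le> 2 * q + 1"
  shows "2 * (real m ^ 2 * (2 * real N + 1) + 1) \<le> q ^ 10"
proof -
  have "real m ^ 2 \<le> (3 * q) ^ 2"
    using assms(2) by (intro power_mono) auto
  moreover have "2 * real N + 1 \<le> 6 * q"
    using assms(1,3) by linarith
  ultimately have "real m ^ 2 * (2 * real N + 1) \<le> (3 * q) ^ 2 * (6 * q)"
    using assms(1) by (intro mult_mono) auto
  moreover have "1 \<le> q ^ 3"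
    using assms(1) by (simp add: one_le_power)
  ultimately have "2 * (real m ^ 2 * (2 * real N + 1) + 1) \<le> 2 ^ 7 * q ^ 3"
    by (simp add: power2_eq_square power3_eq_cube)
  also have "\<dots> \<le> q ^ 7 * q ^ 3"
    using assms(1) by (intro mult_right_mono power_mono) auto
  finally show ?thesis by (simp flip: power_add)
qed

lemma ln_card_grid_models_le:
  assumes "1 \<le> n" "0 < \<epsilon>" "\<epsilon> < 1"
  shows "ln (real (card (grid_models n (3 * n) (nat \<lceil>2 * real n / \<epsilon>\<rceil>))))
    \<le> 30 * real n * ln (real n / \<epsilon>)"
proof (cases "n = 1")
  case True
  define c where "c = card (grid_models n (3 * n) (nat \<lceil>2 * real n / \<epsilon>\<rceil>))"
  have "c \<le> 1"
    using True card_grid_models_one_leaf unfolding c_def by simp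
  then have "c = 0 \<or> c = 1" by linarith
  then have "ln (real c) \<le> 0" by auto
  moreover have "0 \<le> 30 * real n * ln (real n / \<epsilon>)"
    using assms by simp
  ultimately show ?thesis unfolding c_def by linarith
next
  case False
  define q where "q = real n / \<epsilon>"
  define N where "N = nat \<lceil>2 * real n / \<epsilon>\<rceil>"
  have "real n \<le> q" "2 \<le> real n"
    using assms False unfolding q_def by (auto simp: field_simps)
  moreover have "real N = of_int \<lceil>2 * real n / \<epsilon>\<rceil>"
    using assms unfolding N_def by simp
  then have "real N \<le> 2 * q + 1"
    unfolding q_def by linarith
  ultimately have base: "2 * (real (3 * n) ^ 2 * (2 * real N + 1) + 1) \<le> q ^ 10"
    by (intro grid_count_base_le) auto
  have "real (card (grid_models n (3 * n) N)) \<le> real ((2 * ((3 * n)\<^sup>2 * (2 * N + 1) + 1)) ^ (3 * n))"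
    using card_grid_models_le(2)[of n "3 * n" N] by (simp only: of_nat_le_iff)
  also have "\<dots> = (2 * (real (3 * n) ^ 2 * (2 * real N + 1) + 1)) ^ (3 * n)"
    by (simp add: algebra_simps)
  also have "\<dots> \<le> (q ^ 10) ^ (3 * n)"
    using base by (intro power_mono) auto
  also have "\<dots> = q ^ (30 * n)"
    by (simp flip: power_mult)
  finally have "ln (real (card (grid_models n (3 * n) N))) \<le> ln (q ^ (30 * n))"
    using \<open>2 \<le> real n\<close> \<open>real n \<le> q\<close> by (intro ln_mono_nonneg) (auto simp: one_le_power)
  then show ?thesis
    unfolding N_def q_def by (simp add: ln_realpow)
qed

lemma grid_models_net:
  assumes n: "1 \<le> n" and \<epsilon>: "0 < \<epsilon>" "\<epsilon> < 1"
  defines "\<C> \<equiv> grid_models n (3 * n) (nat \<lceil>2 * real n / \<epsilon>\<rceil>)"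
  shows "finite \<C> \<and> \<C> \<noteq> {} \<and> (\<forall>M\<in>\<C>. ising_model n M) \<and>
    ln (real (card \<C>)) \<le> 30 * real n * ln (real n / \<epsilon>) \<and>
    (\<forall>M. ising_model n M \<longrightarrow> (\<exists>M'\<in>\<C>. tv_dist n (leaf_dist n M) (leaf_dist n M') \<le> \<epsilon>))"
proof -
  define N where "N = nat \<lceil>2 * real n / \<epsilon>\<rceil>"
  have "2 * real n / \<epsilon> \<le> real N" "0 < N"
    using n \<epsilon> unfolding N_def by (linarith, simp)
  then have "3 * real n / (2 * real N) \<le> \<epsilon>"
    using \<epsilon> by (simp add: field_simps)
  then have cover: "\<forall>M. ising_model n M \<longrightarrow> (\<exists>M'\<in>\<C>. tv_dist n (leaf_dist n M) (leaf_dist n M') \<le> \<epsilon>)"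
    using grid_models_cover[OF _ \<open>0 < N\<close>] unfolding \<C>_def N_def[symmetric] by force
  moreover have "\<C> \<noteq> {}"
    using exists_ising_model[OF n] cover by blast
  moreover have "\<forall>M\<in>\<C>. ising_model n M"
    unfolding \<C>_def grid_models_def by auto
  ultimately show ?thesis
    using card_grid_models_le(1) ln_card_grid_models_le[OF n \<epsilon>] unfolding \<C>_def by blast
qed

theorem lemma17:
  shows "\<exists>K::real. \<forall>n::nat. \<forall>\<epsilon>::real. n \<ge> 1 \<and> 0 < \<epsilon> \<and> \<epsilon> < 1 \<longrightarrow>
    (\<exists>\<C>::ising set. finite \<C> \<and> \<C> \<noteq> {} \<and> (\<forall>M\<in>\<C>. ising_model n M) \<and>
       ln (real (card \<C>)) \<le> K * real n * ln (real n / \<epsilon>) \<and>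
       (\<forall>M. ising_model n M \<longrightarrow>
          (\<exists>M'\<in>\<C>. tv_dist n (leaf_dist n M) (leaf_dist n M') \<le> \<epsilon>)))"
  by (intro exI[of _ 30] allI impI exI, rule grid_models_net) auto

end
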